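(* For all $X,Y\in\mathcal C$, the set $H=\{\Delta\in\mathrm{Bunch}\mid\forall\Delta'\in X.\ (\Delta\mathbin{;}\Delta')\in Y\}$ belongs to $\mathcal C$ and is the Heyting implication of $X$ and $Y$ in $\mathcal C$: for every $Z\in\mathcal C$, $Z\cap X\subseteq Y$ if and only if $Z\subseteq H$.
   Context: Formulas of BI: $\varphi,\psi ::= \top \mid \bot \mid \varphi\wedge\psi \mid \varphi\vee\psi \mid \varphi\to\psi \mid \mathsf{emp} \mid \varphi\ast\psi \mid \varphi -\!\!\ast\, \psi \mid a$, $a\in\mathrm{Atom}$. Bunches are finite binary trees whose leaves are formulas or empty bunches $\varnothing_m,\varnothing_a$ and whose internal nodes are labelled by the multiplicative comma ($\Delta_1\mathbin{,}\Delta_2$) or the additive semicolon ($\Delta_1\mathbin{;}\Delta_2$). A bunched context $\Delta(-)$ is a bunch with one leaf replaced by a hole; $\Delta(\Gamma)$ fills it with $\Gamma$. Bunch equivalence $\equiv$ is the least equivalence relation making $\mathbin{,}$ commutative, associative with unit $\varnothing_m$, $\mathbin{;}$ commutative, associative with unit $\varnothing_a$, and closed under contexts; $\mathrm{Bunch}$ is the set of bunches modulo $\equiv$. The cut-free BI sequent calculus ($\Delta\vdash_{\mathsf{cf}}\varphi$) has the rules: (ax) $a\vdash a$ for atoms $a$; (equiv) from $\Delta'\vdash\varphi$, $\Delta\equiv\Delta'$ infer $\Delta\vdash\varphi$; (W;) from $\Delta(\Delta_1)\vdash\varphi$ infer $\Delta(\Delta_1\mathbin{;}\Delta_2)\vdash\varphi$;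 (C;) from $\Delta(\Delta_1\mathbin{;}\Delta_1)\vdash\varphi$ infer $\Delta(\Delta_1)\vdash\varphi$; (empR) $\varnothing_m\vdash\mathsf{emp}$; (empL) from $\Delta(\varnothing_m)\vdash\varphi$ infer $\Delta(\mathsf{emp})\vdash\varphi$; ($\ast$R) from $\Delta_1\vdash\varphi$, $\Delta_2\vdash\psi$ infer $\Delta_1\mathbin{,}\Delta_2\vdash\varphi\ast\psi$; ($\ast$L) from $\Delta(\varphi\mathbin{,}\psi)\vdash\chi$ infer $\Delta(\varphi\ast\psi)\vdash\chi$; ($-\!\ast$R) from $\Delta\mathbin{,}\varphi\vdash\psi$ infer $\Delta\vdash\varphi-\!\!\ast\,\psi$; ($-\!\ast$L) from $\Delta_1\vdash\varphi$, $\Delta(\Delta_2\mathbin{,}\psi)\vdash\chi$ infer $\Delta((\Delta_1\mathbin{,}\Delta_2)\mathbin{,}(\varphi-\!\!\ast\,\psi))\vdash\chi$; ($\top$R) $\varnothing_a\vdash\top$; ($\top$L) from $\Delta(\varnothing_a)\vdash\varphi$ infer $\Delta(\top)\vdash\varphi$; ($\wedge$R) from $\Delta_1\vdash\varphi$, $\Delta_2\vdash\psi$ infer $\Delta_1\mathbin{;}\Delta_2\vdash\varphi\wedge\psi$; ($\wedge$L) from $\Delta(\varphi\mathbin{;}\psi)\vdash\chi$ infer $\Delta(\varphi\wedge\psi)\vdash\chi$; ($\to$R) from $\Delta\mathbin{;}\varphi\vdash\psi$ infer $\Delta\vdash\varphi\to\psi$; ($\to$L) from $\Delta_1\vdash\varphi$,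 $\Delta(\Delta_2\mathbin{;}\psi)\vdash\chi$ infer $\Delta((\Delta_1\mathbin{;}\Delta_2)\mathbin{;}(\varphi\to\psi))\vdash\chi$; ($\bot$L) $\Delta(\bot)\vdash\varphi$; ($\vee$R1/2) from $\Delta\vdash\varphi$ (resp. $\Delta\vdash\psi$) infer $\Delta\vdash\varphi\vee\psi$; ($\vee$L) from $\Delta(\varphi)\vdash\chi$, $\Delta(\psi)\vdash\chi$ infer $\Delta(\varphi\vee\psi)\vdash\chi$. (No cut rule.) For a formula $\varphi$, $[\![\varphi]\!]^{\mathrm{out}}=\{\Delta\in\mathrm{Bunch}\mid\Delta\vdash_{\mathsf{cf}}\varphi\}$. For $X\subseteq\mathrm{Bunch}$, $\mathrm{cl}(X)=\bigcap\{[\![\varphi]\!]^{\mathrm{out}}\mid X\subseteq[\![\varphi]\!]^{\mathrm{out}}\}$, and $\mathcal C=\{X\subseteq\mathrm{Bunch}\mid X=\mathrm{cl}(X)\}$. *)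

theory Defs
  imports Main
begin

datatype 'a fm =
    FTop | FBot | FAnd "'a fm" "'a fm" | FOr "'a fm" "'a fm" | FImp "'a fm" "'a fm"
  | FEmp | FStar "'a fm" "'a fm" | FWand "'a fm" "'a fm" | FAtom 'a

datatype 'a rbunch =
    BForm "'a fm"
  | EmpM
  | EmpA
  | BComma "'a rbunch" "'a rbunch"
  | BSemi "'a rbunch" "'a rbunch"

datatype 'a bctx =
    Hole
  | CCommaL "'a bctx" "'a rbunch"
  | CCommaR "'a rbunch" "'a bctx"
  | CSemiL "'a bctx" "'a rbunch"
  | CSemiR "'a rbunch" "'a bctx"

fun fill :: "'a bctx \<Rightarrow> 'a rbunch \<Rightarrow> 'a rbunch" where
  "fill Hole G = G"
| "fill (CCommaL C D) G = BComma (fill C G) D"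
| "fill (CCommaR D C) G = BComma D (fill C G)"
| "fill (CSemiL C D) G = BSemi (fill C G) D"
| "fill (CSemiR D C) G = BSemi D (fill C G)"

inductive beq :: "'a rbunch \<Rightarrow> 'a rbunch \<Rightarrow> bool" where
  beq_refl: "beq D D"
| beq_sym: "beq D E \<Longrightarrow> beq E D"
| beq_trans: "beq D E \<Longrightarrow> beq E F \<Longrightarrow> beq D F"
| comma_comm: "beq (BComma D E) (BComma E D)"
| comma_assoc: "beq (BComma (BComma D E) F) (BComma D (BComma E F))"
| comma_unit: "beq (BComma D EmpM) D"
| semi_comm: "beq (BSemi D E) (BSemi E D)"
| semi_assoc: "beq (BSemi (BSemi D E) F) (BSemi D (BSemi E F))"
| semi_unit: "beq (BSemi D EmpA) D"
| beq_ctx: "beq D E \<Longrightarrow> beq (fill C D) (fill C E)"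

lemma beq_equivp: "equivp beq"
  by (intro equivpI reflpI sympI transpI) (auto intro: beq.intros)

inductive cf :: "'a rbunch \<Rightarrow> 'a fm \<Rightarrow> bool" where
  ax: "cf (BForm (FAtom a)) (FAtom a)"
| equiv: "cf D' p \<Longrightarrow> beq D D' \<Longrightarrow> cf D p"
| weakS: "cf (fill C D1) p \<Longrightarrow> cf (fill C (BSemi D1 D2)) p"
| contrS: "cf (fill C (BSemi D1 D1)) p \<Longrightarrow> cf (fill C D1) p"
| empR: "cf EmpM FEmp"
| empL: "cf (fill C EmpM) p \<Longrightarrow> cf (fill C (BForm FEmp)) p"
| starR: "cf D1 p \<Longrightarrow> cf D2 q \<Longrightarrow> cf (BComma D1 D2) (FStar p q)"
| starL: "cf (fill C (BComma (BForm p) (BForm q))) r \<Longrightarrow> cf (fill C (BForm (FStar p q))) r"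
| wandR: "cf (BComma D (BForm p)) q \<Longrightarrow> cf D (FWand p q)"
| wandL: "cf D1 p \<Longrightarrow> cf (fill C (BComma D2 (BForm q))) r \<Longrightarrow>
           cf (fill C (BComma (BComma D1 D2) (BForm (FWand p q)))) r"
| topR: "cf EmpA FTop"
| topL: "cf (fill C EmpA) p \<Longrightarrow> cf (fill C (BForm FTop)) p"
| andR: "cf D1 p \<Longrightarrow> cf D2 q \<Longrightarrow> cf (BSemi D1 D2) (FAnd p q)"
| andL: "cf (fill C (BSemi (BForm p) (BForm q))) r \<Longrightarrow> cf (fill C (BForm (FAnd p q))) r"
| impR: "cf (BSemi D (BForm p)) q \<Longrightarrow> cf D (FImp p q)"
| impL: "cf D1 p \<Longrightarrow> cf (fill C (BSemi D2 (BForm q))) r \<Longrightarrow>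
           cf (fill C (BSemi (BSemi D1 D2) (BForm (FImp p q)))) r"
| botL: "cf (fill C (BForm FBot)) p"
| orR1: "cf D p \<Longrightarrow> cf D (FOr p q)"
| orR2: "cf D q \<Longrightarrow> cf D (FOr p q)"
| orL: "cf (fill C (BForm p)) r \<Longrightarrow> cf (fill C (BForm q)) r \<Longrightarrow> cf (fill C (BForm (FOr p q))) r"

quotient_type 'a bunch = "'a rbunch" / beq
  by (rule beq_equivp)

lift_definition semi :: "'a bunch \<Rightarrow> 'a bunch \<Rightarrow> 'a bunch" is BSemi
proof -
  fix a b c d :: "'a rbunch"
  assume ab: "beq a b" and cd: "beq c d"
  have "beq (fill (CSemiL Hole c) a) (fill (CSemiL Hole c) b)" using ab by (rule beq_ctx)
  moreover have "beq (fill (CSemiR b Hole) c) (fill (CSemiR b Hole) d)" using cd by (rule beq_ctx)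
  ultimately show "beq (BSemi a c) (BSemi b d)" by (auto intro: beq_trans)
qed

lift_definition derivable :: "'a bunch \<Rightarrow> 'a fm \<Rightarrow> bool" is cf
  by (auto intro: cf.equiv beq_sym)

definition out :: "'a fm \<Rightarrow> 'a bunch set" where
  "out p = {D. derivable D p}"

definition cl :: "'a bunch set \<Rightarrow> 'a bunch set" where
  "cl X = \<Inter> {out p | p. X \<subseteq> out p}"

definition closed_sets :: "'a bunch set set" where
  "closed_sets = {X. X = cl X}"

end

theory Submission
  imports Defs
begin

(* A closed set is the intersection of the sets out \<phi> containing it. Reading "," as \<ast>, ";" as \<and>
   and the empty bunches as emp and \<top> turns a bunch \<Delta>' into a formula bunch_fm \<Delta>', and in the
   cut-free calculus \<Delta>;\<Delta>' \<turnstile> \<chi> holds iff \<Delta> \<turnstile> bunch_fm \<Delta>' \<rightarrow> \<chi>: one direction is the left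
   rules followed by \<rightarrow>R, the other is the invertibility of all these rules. So H is the intersection of
   the sets out (bunch_fm \<Delta>' \<rightarrow> \<chi>) with \<Delta>' \<in> X and Y \<subseteq> out \<chi>, hence closed. The adjunction
   is weakening (Z;X lies in Z and in X) and contraction (\<Delta> \<in> Z \<inter> X gives \<Delta>;\<Delta> \<in> Y). *)

fun ctx_comp :: "'a bctx \<Rightarrow> 'a bctx \<Rightarrow> 'a bctx" where
  "ctx_comp Hole C = C"
| "ctx_comp (CCommaL K D) C = CCommaL (ctx_comp K C) D"
| "ctx_comp (CCommaR D K) C = CCommaR D (ctx_comp K C)"
| "ctx_comp (CSemiL K D) C = CSemiL (ctx_comp K C) D"
| "ctx_comp (CSemiR D K) C = CSemiR D (ctx_comp K C)"

lemma fill_ctx_comp [simp]: "fill (ctx_comp K C) E = fill K (fill C E)"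
  by (induction K) auto

definition ant_le :: "'a rbunch \<Rightarrow> 'a rbunch \<Rightarrow> bool" where
  "ant_le G B \<longleftrightarrow> (\<forall>C r. cf (fill C G) r \<longrightarrow> cf (fill C B) r)"

lemma ant_leD: "ant_le G B \<Longrightarrow> cf (fill C G) r \<Longrightarrow> cf (fill C B) r"
  unfolding ant_le_def by blast

lemma ant_le_refl: "ant_le B B"
  unfolding ant_le_def by blast

lemma ant_le_trans: "ant_le G B \<Longrightarrow> ant_le B B' \<Longrightarrow> ant_le G B'"
  unfolding ant_le_def by blast

lemma ant_le_fill: "ant_le G B \<Longrightarrow> ant_le (fill K G) (fill K B)"
  unfolding ant_le_def by (metis fill_ctx_comp)

lemma ant_le_comma:
  assumes "ant_le G1 B1" and "ant_le G2 B2"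
  shows "ant_le (BComma G1 G2) (BComma B1 B2)"
proof -
  have "ant_le (fill (CCommaL Hole G2) G1) (fill (CCommaL Hole G2) B1)"
    using assms(1) by (rule ant_le_fill)
  moreover have "ant_le (fill (CCommaR B1 Hole) G2) (fill (CCommaR B1 Hole) B2)"
    using assms(2) by (rule ant_le_fill)
  ultimately show ?thesis by (simp add: ant_le_trans)
qed

lemma ant_le_semi:
  assumes "ant_le G1 B1" and "ant_le G2 B2"
  shows "ant_le (BSemi G1 G2) (BSemi B1 B2)"
proof -
  have "ant_le (fill (CSemiL Hole G2) G1) (fill (CSemiL Hole G2) B1)"
    using assms(1) by (rule ant_le_fill)
  moreover have "ant_le (fill (CSemiR B1 Hole) G2) (fill (CSemiR B1 Hole) B2)"
    using assms(2) by (rule ant_le_fill)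
  ultimately show ?thesis by (simp add: ant_le_trans)
qed

(* The invertible left rules: the principal formula and the bunch replacing it in the premise. *)
inductive left_premise :: "'a fm \<Rightarrow> 'a rbunch \<Rightarrow> bool" where
  "left_premise FEmp EmpM"
| "left_premise FTop EmpA"
| "left_premise (FStar p q) (BComma (BForm p) (BForm q))"
| "left_premise (FAnd p q) (BSemi (BForm p) (BForm q))"

lemma ant_le_left_premise: "left_premise f G \<Longrightarrow> ant_le G (BForm f)"
  unfolding ant_le_def by (induction rule: left_premise.induct) (auto intro: cf.intros)

lemma left_premise_unique: "left_premise f G \<Longrightarrow> left_premise f G' \<Longrightarrow> G' = G"
  by (induction rule: left_premise.induct) (auto elim: left_premise.cases)

fun bunch_fm :: "'a rbunch \<Rightarrow> 'a fm" where
  "bunch_fm (BForm f) = f"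
| "bunch_fm EmpM = FEmp"
| "bunch_fm EmpA = FTop"
| "bunch_fm (BComma G1 G2) = FStar (bunch_fm G1) (bunch_fm G2)"
| "bunch_fm (BSemi G1 G2) = FAnd (bunch_fm G1) (bunch_fm G2)"

lemma ant_le_bunch_fm: "ant_le G (BForm (bunch_fm G))"
proof (induction G)
  case (BComma G1 G2)
  then show ?case
    by (metis ant_le_comma ant_le_left_premise ant_le_trans bunch_fm.simps(4) left_premise.intros(3))
next
  case (BSemi G1 G2)
  then show ?case
    by (metis ant_le_semi ant_le_left_premise ant_le_trans bunch_fm.simps(5) left_premise.intros(4))
qed (auto intro: ant_le_refl ant_le_left_premise left_premise.intros)

definition subst_fm :: "'a fm \<Rightarrow> 'a rbunch \<Rightarrow> 'a fm \<Rightarrow> 'a rbunch" where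
  "subst_fm f G h = (if h = f then G else BForm h)"

fun subst_bunch :: "'a fm \<Rightarrow> 'a rbunch \<Rightarrow> 'a rbunch \<Rightarrow> 'a rbunch" where
  "subst_bunch f G (BForm h) = subst_fm f G h"
| "subst_bunch f G EmpM = EmpM"
| "subst_bunch f G EmpA = EmpA"
| "subst_bunch f G (BComma B1 B2) = BComma (subst_bunch f G B1) (subst_bunch f G B2)"
| "subst_bunch f G (BSemi B1 B2) = BSemi (subst_bunch f G B1) (subst_bunch f G B2)"

fun subst_ctx :: "'a fm \<Rightarrow> 'a rbunch \<Rightarrow> 'a bctx \<Rightarrow> 'a bctx" where
  "subst_ctx f G Hole = Hole"
| "subst_ctx f G (CCommaL C D) = CCommaL (subst_ctx f G C) (subst_bunch f G D)"
| "subst_ctx f G (CCommaR D C) = CCommaR (subst_bunch f G D) (subst_ctx f G C)"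
| "subst_ctx f G (CSemiL C D) = CSemiL (subst_ctx f G C) (subst_bunch f G D)"
| "subst_ctx f G (CSemiR D C) = CSemiR (subst_bunch f G D) (subst_ctx f G C)"

lemma subst_bunch_fill [simp]:
  "subst_bunch f G (fill C D) = fill (subst_ctx f G C) (subst_bunch f G D)"
  by (induction C) auto

lemma beq_subst_bunch: "beq D E \<Longrightarrow> beq (subst_bunch f G D) (subst_bunch f G E)"
proof (induction rule: beq.induct)
  case (beq_ctx D E C)
  then show ?case by (simp add: beq.beq_ctx)
qed (auto intro: beq.intros)

lemma ant_le_subst_bunch: "ant_le G (BForm f) \<Longrightarrow> ant_le (subst_bunch f G D) D"
  by (induction D) (auto simp: subst_fm_def intro: ant_le_refl ant_le_comma ant_le_semi)

lemma subst_bunch_left_premise: "left_premise f G \<Longrightarrow> subst_bunch f G G = G"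
  by (induction rule: left_premise.induct) (auto simp: subst_fm_def)

lemma subst_fm_non_premise [simp]:
  assumes "left_premise f G"
  shows "subst_fm f G (FAtom a) = BForm (FAtom a)" "subst_fm f G FBot = BForm FBot"
    "subst_fm f G (FOr p q) = BForm (FOr p q)" "subst_fm f G (FImp p q) = BForm (FImp p q)"
    "subst_fm f G (FWand p q) = BForm (FWand p q)"
  using assms by (auto simp: subst_fm_def elim: left_premise.cases)

lemma cf_fill_subst_bunchD:
  "left_premise f G \<Longrightarrow> cf (fill K (subst_bunch f G D)) r \<Longrightarrow> cf (fill K D) r"
  by (metis ant_leD ant_le_left_premise ant_le_subst_bunch)

lemma cf_subst_left_rule:
  assumes f: "left_premise f G" and a: "left_premise a P"
    and "cf (fill K (subst_bunch f G P)) r"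
  shows "cf (fill K (subst_fm f G a)) r"
proof -
  have P: "cf (fill K P) r" using f assms(3) by (rule cf_fill_subst_bunchD)
  show ?thesis
  proof (cases "a = f")
    case True
    then have "P = G" using f a by (metis left_premise_unique)
    then show ?thesis using P True by (simp add: subst_fm_def)
  next
    case False
    then show ?thesis using P ant_leD[OF ant_le_left_premise[OF a]] by (simp add: subst_fm_def)
  qed
qed

(* Invertibility of the left rules for emp, \<top>, \<ast> and \<and>. All occurrences of the principal
   formula are replaced at once, because a single occurrence cannot be followed through
   contraction. *)

lemma cf_subst_bunch:
  assumes "cf B r" and f: "left_premise f G"
  shows "cf (subst_bunch f G B) r"
  using assms(1)
proof (induction rule: cf.induct)
  case (equiv D' p D)
  then show ?case using beq_subst_bunch cf.equiv by blast
next
  case (weakS C D1 p D2)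
  then show ?case using cf.weakS by fastforce
next
  case (contrS C D1 p)
  then show ?case using cf.contrS by fastforce
next
  case (empL C p)
  then show ?case using cf_subst_left_rule[OF f left_premise.intros(1)] by simp
next
  case (topL C p)
  then show ?case using cf_subst_left_rule[OF f left_premise.intros(2)] by simp
next
  case (starL C p q r)
  then show ?case using cf_subst_left_rule[OF f left_premise.intros(3)] by simp
next
  case (andL C p q r)
  then show ?case using cf_subst_left_rule[OF f left_premise.intros(4)] by simp
next
  case (wandR D p q)
  then show ?case
    using cf_fill_subst_bunchD[OF f, of "CCommaR (subst_bunch f G D) Hole" "BForm p"]
    by (simp add: cf.wandR)
next
  case (wandL D1 p C D2 q r)
  then show ?case
    using cf_fill_subst_bunchD[OF f,
        of "ctx_comp (subst_ctx f G C) (CCommaR (subst_bunch f G D2) Hole)" "BForm q"] f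
    by (simp add: cf.wandL)
next
  case (impR D p q)
  then show ?case
    using cf_fill_subst_bunchD[OF f, of "CSemiR (subst_bunch f G D) Hole" "BForm p"]
    by (simp add: cf.impR)
next
  case (impL D1 p C D2 q r)
  then show ?case
    using cf_fill_subst_bunchD[OF f,
        of "ctx_comp (subst_ctx f G C) (CSemiR (subst_bunch f G D2) Hole)" "BForm q"] f
    by (simp add: cf.impL)
next
  case (orL C p r q)
  then show ?case using f cf_fill_subst_bunchD[OF f, of _ "BForm _"] by (simp add: cf.orL)
next
  case (ax a)
  then show ?case using f by (simp add: cf.ax)
next
  case (botL C p)
  then show ?case using f by (simp add: cf.botL)
qed (simp_all add: cf.intros)

lemma ant_le_left_premise_rev:
  assumes f: "left_premise f G"
  shows "ant_le (BForm f) G"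
  unfolding ant_le_def
proof (intro allI impI)
  fix C r
  assume "cf (fill C (BForm f)) r"
  then have "cf (subst_bunch f G (fill C (BForm f))) r" using f by (rule cf_subst_bunch)
  then have "cf (fill Hole (subst_bunch f G (fill C G))) r"
    using f by (simp add: subst_fm_def subst_bunch_left_premise)
  then have "cf (fill Hole (fill C G)) r" by (rule cf_fill_subst_bunchD[OF f])
  then show "cf (fill C G) r" by simp
qed

lemma ant_le_bunch_fm_rev: "ant_le (BForm (bunch_fm G)) G"
proof (induction G)
  case (BComma G1 G2)
  then show ?case
    by (metis ant_le_comma ant_le_left_premise_rev ant_le_trans bunch_fm.simps(4) left_premise.intros(3))
next
  case (BSemi G1 G2)
  then show ?case
    by (metis ant_le_semi ant_le_left_premise_rev ant_le_trans bunch_fm.simps(5) left_premise.intros(4))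
qed (auto intro: ant_le_refl ant_le_left_premise_rev left_premise.intros)

lemma cf_impR_inv: "cf D (FImp p q) \<Longrightarrow> cf (BSemi D (BForm p)) q"
proof (induction D "FImp p q" rule: cf.induct)
  case (equiv D' D)
  then show ?case using cf.equiv beq_ctx[of D D' "CSemiL Hole (BForm p)"] by simp
next
  case (weakS C D1 D2)
  then show ?case using cf.weakS[of "CSemiL C (BForm p)" D1 q D2] by simp
next
  case (contrS C D1)
  then show ?case using cf.contrS[of "CSemiL C (BForm p)" D1 q] by simp
next
  case (empL C)
  then show ?case using cf.empL[of "CSemiL C (BForm p)" q] by simp
next
  case (starL C a b)
  then show ?case using cf.starL[of "CSemiL C (BForm p)" a b q] by simp
next
  case (wandL D1 a C D2 b)
  then show ?case using cf.wandL[of D1 a "CSemiL C (BForm p)" D2 b q] by simp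
next
  case (topL C)
  then show ?case using cf.topL[of "CSemiL C (BForm p)" q] by simp
next
  case (andL C a b)
  then show ?case using cf.andL[of "CSemiL C (BForm p)" a b q] by simp
next
  case (impL D1 a C D2 b)
  then show ?case using cf.impL[of D1 a "CSemiL C (BForm p)" D2 b q] by simp
next
  case (botL C)
  then show ?case using cf.botL[of "CSemiL C (BForm p)" q] by simp
next
  case (orL C a b)
  then show ?case using cf.orL[of "CSemiL C (BForm p)" a q b] by simp
qed

lemma cf_semi_iff_FImp: "cf (BSemi D E) q \<longleftrightarrow> cf D (FImp (bunch_fm E) q)"
proof
  assume "cf (BSemi D E) q"
  then have "cf (fill (CSemiR D Hole) E) q" by simp
  then have "cf (fill (CSemiR D Hole) (BForm (bunch_fm E))) q" by (rule ant_leD[OF ant_le_bunch_fm])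
  then show "cf D (FImp (bunch_fm E) q)" by (simp add: cf.impR)
next
  assume "cf D (FImp (bunch_fm E) q)"
  then have "cf (fill (CSemiR D Hole) (BForm (bunch_fm E))) q" by (simp add: cf_impR_inv)
  then have "cf (fill (CSemiR D Hole) E) q" by (rule ant_leD[OF ant_le_bunch_fm_rev])
  then show "cf (BSemi D E) q" by simp
qed

lemma derivable_semi_weaken: "derivable D p \<Longrightarrow> derivable (semi D E) p"
  by transfer (rule cf.weakS[of Hole, simplified])

lemma derivable_semi_contract: "derivable (semi D D) p \<Longrightarrow> derivable D p"
  by transfer (rule cf.contrS[of Hole, simplified])

lemma semi_commute: "semi D E = semi E D"
  by transfer (rule beq.semi_comm)

lemma derivable_semi_iff_FImp:
  "derivable (semi D E) q \<longleftrightarrow> derivable D (FImp (bunch_fm (rep_bunch E)) q)"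
proof -
  have "derivable (semi (abs_bunch d) (abs_bunch e)) q \<longleftrightarrow>
      derivable (abs_bunch d) (FImp (bunch_fm e) q)" for d e
    by (simp add: semi.abs_eq derivable.abs_eq cf_semi_iff_FImp)
  from this[of "rep_bunch D" "rep_bunch E"] show ?thesis
    by (simp add: Quotient3_abs_rep[OF Quotient3_bunch])
qed

lemma closed_sets_mem_iff: "X \<in> closed_sets \<Longrightarrow> D \<in> X \<longleftrightarrow> (\<forall>p. X \<subseteq> out p \<longrightarrow> derivable D p)"
  unfolding closed_sets_def cl_def out_def by blast

lemma closed_sets_derivable_mono:
  assumes X: "X \<in> closed_sets" and "D \<in> X" and "\<And>p. derivable D p \<Longrightarrow> derivable E p"
  shows "E \<in> X"
  using assms(2,3) unfolding closed_sets_mem_iff[OF X] by blast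

lemma INT_out_closed: "(\<Inter>i\<in>I. out (\<phi> i)) \<in> closed_sets"
proof -
  have "cl (\<Inter>i\<in>I. out (\<phi> i)) \<subseteq> out (\<phi> i)" if "i \<in> I" for i
    using that unfolding cl_def by blast
  moreover have "X \<subseteq> cl X" for X :: "'a bunch set"
    unfolding cl_def by blast
  ultimately show ?thesis unfolding closed_sets_def by blast
qed

lemma closed_semi_left: "X \<in> closed_sets \<Longrightarrow> D \<in> X \<Longrightarrow> semi D E \<in> X"
  by (rule closed_sets_derivable_mono) (assumption+, erule derivable_semi_weaken)

lemma closed_semi_right: "X \<in> closed_sets \<Longrightarrow> E \<in> X \<Longrightarrow> semi D E \<in> X"
  by (subst semi_commute) (rule closed_semi_left)

lemma closed_semi_diag: "X \<in> closed_sets \<Longrightarrow> semi D D \<in> X \<Longrightarrow> D \<in> X"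
  by (rule closed_sets_derivable_mono) (assumption+, erule derivable_semi_contract)

lemma closed_semi_implication:
  assumes "Y \<in> closed_sets"
  shows "{D. \<forall>D'\<in>X. semi D D' \<in> Y} \<in> closed_sets"
proof -
  have "semi D D' \<in> Y \<longleftrightarrow> (\<forall>q. Y \<subseteq> out q \<longrightarrow> D \<in> out (FImp (bunch_fm (rep_bunch D')) q))"
    for D D'
    by (simp only: closed_sets_mem_iff[OF assms] derivable_semi_iff_FImp out_def mem_Collect_eq)
  then have "{D. \<forall>D'\<in>X. semi D D' \<in> Y} =
      (\<Inter>i\<in>X \<times> {q. Y \<subseteq> out q}. out (FImp (bunch_fm (rep_bunch (fst i))) (snd i)))"
    by auto
  then show ?thesis by (simp only: INT_out_closed)
qed

theorem proposition6p5:
  fixes X Y :: "'a bunch set"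
  assumes "X \<in> closed_sets" and "Y \<in> closed_sets"
  defines "H \<equiv> {D. \<forall>D'\<in>X. semi D D' \<in> Y}"
  shows "H \<in> closed_sets \<and> (\<forall>Z\<in>closed_sets. Z \<inter> X \<subseteq> Y \<longleftrightarrow> Z \<subseteq> H)"
proof (intro conjI ballI iffI)
  show "H \<in> closed_sets" unfolding H_def using assms(2) by (rule closed_semi_implication)
next
  fix Z assume "Z \<in> closed_sets" and "Z \<inter> X \<subseteq> Y"
  then show "Z \<subseteq> H" unfolding H_def using assms(1) closed_semi_left closed_semi_right by blast
next
  fix Z assume "Z \<subseteq> H"
  then show "Z \<inter> X \<subseteq> Y" unfolding H_def using assms(2) closed_semi_diag by blast
qed

end
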